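(* Let $s\ge 1$, $q=2^s$, and let $k,n$ be integers with $n\ge 2k\ge 2$. Let $g(X)=X^k+c_{k-1}X^{k-1}+\dots+c_1X+c_0\in\mathbb{F}_q[X]$ be a monic polynomial of degree $k$ dividing $X^n-1$, and suppose the cyclic code of length $n$ over $\mathbb{F}_q$ generated by $g(X)$ (the set of polynomials of degree $<n$ that are multiples of $g$, viewed as vectors of coefficients, which is an $[n,n-k]_q$ code) is MDS. Let $C=\mathsf{Companion}(c_0,\dots,c_{k-1})$. Then the matrix $C^k$ is MDS.
   Context: For $c_0,\dots,c_{k-1}\in\mathbb{F}_q$, $\mathsf{Companion}(c_0,\dots,c_{k-1})$ denotes the $k\times k$ matrix whose first $k-1$ rows are $e_2,e_3,\dots,e_k$ (ones on the superdiagonal, zeros elsewhere) and whose last row is $(c_0,c_1,\dots,c_{k-1})$. A linear code over $\mathbb{F}_q$ of length $n$ and dimension $k'$ is MDS if its minimal Hamming distance equals $n-k'+1$. A $k\times k$ matrix $M$ over $\mathbb{F}_q$ is called MDS if the $k\times 2k$ matrix $[I_k\mid M]$ generates an MDS code of length $2k$ and dimension $k$ (equivalently, minimal distance $k+1$). *)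

theory Defs
  imports "HOL-Computational_Algebra.Polynomial" "Jordan_Normal_Form.Matrix"
begin

definition hamming_dist :: "'a vec \<Rightarrow> 'a vec \<Rightarrow> nat" where
  "hamming_dist x y = card {i. i < dim_vec x \<and> x $ i \<noteq> y $ i}"

definition min_dist :: "'a vec set \<Rightarrow> nat" where
  "min_dist C = Min {hamming_dist x y | x y. x \<in> C \<and> y \<in> C \<and> x \<noteq> y}"

definition is_MDS_code :: "nat \<Rightarrow> nat \<Rightarrow> 'a vec set \<Rightarrow> bool" where
  "is_MDS_code n k' C \<longleftrightarrow> min_dist C = n - k' + 1"

definition cyclic_code :: "nat \<Rightarrow> 'a::comm_ring_1 poly \<Rightarrow> 'a vec set" where
  "cyclic_code n g = {vec n (\<lambda>i. coeff p i) | p. degree p < n \<and> g dvd p}"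

(* Companion(c_0,...,c_{k-1}): rows e_2,...,e_k, last row (c_0,...,c_{k-1}) *)
definition companion_mat :: "nat \<Rightarrow> (nat \<Rightarrow> 'a::{zero,one}) \<Rightarrow> 'a mat" where
  "companion_mat k c = mat k k (\<lambda>(i,j). if i + 1 < k then (if j = i + 1 then 1 else 0) else c j)"

(* the code generated by the k x 2k matrix [I_k | M]: all u [I_k | M] = (u, u M) *)
definition systematic_code :: "'a::semiring_0 mat \<Rightarrow> 'a vec set" where
  "systematic_code M = (let k = dim_row M in
     {vec (2 * k) (\<lambda>i. if i < k then u $ i else (transpose_mat M *\<^sub>v u) $ (i - k)) | u. u \<in> carrier_vec k})"

definition is_MDS_matrix :: "'a::semiring_0 mat \<Rightarrow> bool" where
  "is_MDS_matrix M \<longleftrightarrow> is_MDS_code (2 * dim_row M) (dim_row M) (systematic_code M)"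

end

theory Submission
  imports Defs "HOL-Number_Theory.Residues"
begin

text \<open>
  Identify \<open>u \<in> \<bbbF>\<^sup>k\<close> with \<open>h = \<Sum> u\<^sub>i X\<^sup>i\<close>. The transposed companion matrix of the
  coefficients \<open>-c\<^sub>i\<close> acts as multiplication by \<open>X\<close> modulo \<open>g\<close>, so the codeword of
  \<open>[I | C\<^sup>k]\<close> belonging to \<open>u\<close> is \<open>(h, X\<^sup>k h mod g)\<close>; in characteristic 2 the signs
  do not matter. Up to sign and swapping its two halves, this is the coefficient vector
  of \<open>X\<^sup>k h - (X\<^sup>k h mod g)\<close>, a nonzero multiple of \<open>g\<close> of degree \<open>< 2k \<le> n\<close>, hence a
  codeword of the MDS cyclic code, whose weight is therefore at least \<open>k + 1\<close>.
\<close>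

hide_const (open) up_ring.monom up_ring.coeff

lemma CHAR_eq_2_if_card_eq_power_2:
  assumes "card (UNIV :: 'a::{field,finite} set) = 2 ^ s"
  shows "CHAR('a) = 2"
proof -
  have "prime CHAR('a)"
    by (intro prime_CHAR_semidom finite_imp_CHAR_pos) simp
  moreover have "CHAR('a) dvd 2 ^ s"
    using CHAR_dvd_CARD[where 'a='a] assms by simp
  ultimately show ?thesis
    by (metis prime_dvd_power primes_dvd_imp_eq two_is_prime_nat)
qed

definition hamming_weight :: "'a::zero vec \<Rightarrow> nat" where
  "hamming_weight v = card {i. i < dim_vec v \<and> v $ i \<noteq> 0}"

lemma hamming_dist_eq_hamming_weight_diff:
  fixes x y :: "'a::ab_group_add vec"
  assumes "dim_vec y = dim_vec x"
  shows "hamming_dist x y = hamming_weight (x - y)"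
  unfolding hamming_dist_def hamming_weight_def using assms
  by (intro arg_cong[where f = card]) auto

lemma hamming_weight_le_dim_vec: "hamming_weight v \<le> dim_vec v"
  unfolding hamming_weight_def by (rule card_mono[of "{..<dim_vec v}", simplified]) auto

lemma hamming_weight_eq_0_iff: "hamming_weight v = 0 \<longleftrightarrow> v = 0\<^sub>v (dim_vec v)"
  by (auto simp: hamming_weight_def vec_eq_iff)

lemma hamming_weight_uminus [simp]:
  "hamming_weight (- v :: 'a::ab_group_add vec) = hamming_weight v"
  unfolding hamming_weight_def by (intro arg_cong[where f = card]) auto

lemma hamming_weight_zero [simp]: "hamming_weight (0\<^sub>v n) = 0"
  by (simp add: hamming_weight_def)

lemma hamming_weight_append_vec:
  "hamming_weight (u @\<^sub>v v) = hamming_weight u + hamming_weight v"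
proof -
  let ?U = "{i. i < dim_vec u \<and> u $ i \<noteq> 0}" and ?V = "{i. i < dim_vec v \<and> v $ i \<noteq> 0}"
  have "{i. i < dim_vec (u @\<^sub>v v) \<and> (u @\<^sub>v v) $ i \<noteq> 0} = ?U \<union> (+) (dim_vec u) ` ?V"
    (is "?W = ?R")
  proof (rule Set.set_eqI)
    fix i
    show "i \<in> ?W \<longleftrightarrow> i \<in> ?R"
      by (cases "i < dim_vec u") (auto simp: image_iff intro!: exI[where x = "i - dim_vec u"])
  qed
  moreover have "card (?U \<union> (+) (dim_vec u) ` ?V) = card ?U + card ?V"
    by (subst card_Un_disjoint) (auto simp: card_image)
  ultimately show ?thesis
    by (simp add: hamming_weight_def)
qed

lemma hamming_dist_le_dim_vec: "hamming_dist x y \<le> dim_vec x"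
  unfolding hamming_dist_def by (rule card_mono[of "{..<dim_vec x}", simplified]) auto

lemma finite_hamming_dists:
  assumes "C \<subseteq> carrier_vec N"
  shows "finite {hamming_dist x y | x y. x \<in> C \<and> y \<in> C \<and> x \<noteq> y}"
proof (rule finite_subset[of _ "{..N}"])
  show "{hamming_dist x y | x y. x \<in> C \<and> y \<in> C \<and> x \<noteq> y} \<subseteq> {..N}"
  proof
    fix d assume "d \<in> {hamming_dist x y | x y. x \<in> C \<and> y \<in> C \<and> x \<noteq> y}"
    then obtain x y where "d = hamming_dist x y" "x \<in> C" by blast
    then show "d \<in> {..N}"
      using assms hamming_dist_le_dim_vec[of x y] by auto
  qed
qed simp

lemma min_dist_le_hamming_dist:
  assumes "C \<subseteq> carrier_vec N" "x \<in> C" "y \<in> C" "x \<noteq> y"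
  shows "min_dist C \<le> hamming_dist x y"
  unfolding min_dist_def
proof (rule Min_le)
  show "finite {hamming_dist x y | x y. x \<in> C \<and> y \<in> C \<and> x \<noteq> y}"
    using assms(1) by (rule finite_hamming_dists)
qed (use assms(2-4) in blast)

lemma min_dist_eqI:
  assumes "C \<subseteq> carrier_vec N" "x\<^sub>0 \<in> C" "y\<^sub>0 \<in> C" "x\<^sub>0 \<noteq> y\<^sub>0"
    and "hamming_dist x\<^sub>0 y\<^sub>0 \<le> d"
    and "\<And>x y. x \<in> C \<Longrightarrow> y \<in> C \<Longrightarrow> x \<noteq> y \<Longrightarrow> d \<le> hamming_dist x y"
  shows "min_dist C = d"
proof -
  let ?D = "{hamming_dist x y | x y. x \<in> C \<and> y \<in> C \<and> x \<noteq> y}"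
  have "Min ?D \<in> ?D"
  proof (rule Min_in)
    show "finite ?D" using assms(1) by (rule finite_hamming_dists)
  qed (use assms(2-4) in blast)
  then obtain x y where "min_dist C = hamming_dist x y" "x \<in> C" "y \<in> C" "x \<noteq> y"
    unfolding min_dist_def by blast
  then have "d \<le> min_dist C"
    using assms(6) by simp
  moreover have "min_dist C \<le> d"
    using min_dist_le_hamming_dist[OF assms(1-4)] assms(5) by linarith
  ultimately show ?thesis by simp
qed

definition poly_of_vec :: "'a::comm_ring_1 vec \<Rightarrow> 'a poly" where
  "poly_of_vec v = (\<Sum>i<dim_vec v. monom (v $ i) i)"

lemma coeff_poly_of_vec: "coeff (poly_of_vec v) i = (if i < dim_vec v then v $ i else 0)"
  by (simp add: poly_of_vec_def coeff_sum coeff_monom)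

lemma vec_coeff_poly_of_vec: "v \<in> carrier_vec k \<Longrightarrow> vec k (coeff (poly_of_vec v)) = v"
  by (auto simp: coeff_poly_of_vec)

lemma degree_poly_of_vec_le: "degree (poly_of_vec v) \<le> dim_vec v - 1"
  by (rule degree_le) (auto simp: coeff_poly_of_vec)

lemma poly_of_vec_vec_coeff: "degree p < k \<Longrightarrow> poly_of_vec (vec k (coeff p)) = p"
  by (rule poly_eqI) (auto simp: coeff_poly_of_vec coeff_eq_0)

lemma degree_mod_less_degree_pos:
  fixes p g :: "'a::field poly"
  assumes "degree g > 0"
  shows "degree (p mod g) < degree g"
proof (cases "p mod g = 0")
  case False
  with assms show ?thesis by (intro degree_mod_less') auto
qed (use assms in simp)

lemma transpose_companion_mult_vec:
  fixes g :: "'a::field poly"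
  assumes lc: "lead_coeff g = 1" and dg: "degree g = Suc m" and w: "w \<in> carrier_vec (Suc m)"
  shows "transpose_mat (companion_mat (Suc m) (\<lambda>i. - coeff g i)) *\<^sub>v w
       = vec (Suc m) (coeff ((monom 1 1 * poly_of_vec w) mod g))"
proof -
  define a where "a = w $ m"
  define q where "q = monom 1 1 * poly_of_vec w - Polynomial.smult a g"
  have coeff_q: "coeff q i = (if 0 < i \<and> i \<le> Suc m then w $ (i - 1) else 0) - a * coeff g i" for i
    using w by (auto simp: q_def coeff_monom_mult coeff_poly_of_vec)
  have "degree q \<le> m"
    using lc dg by (intro degree_le) (auto simp: coeff_q a_def coeff_eq_0 le_Suc_eq)
  then have "q mod g = q"
    using dg by (intro mod_poly_less) simp
  moreover have "monom 1 1 * poly_of_vec w = q + [:a:] * g"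
    by (simp add: q_def)
  ultimately have mod_eq: "(monom 1 1 * poly_of_vec w) mod g = q"
    by (metis mod_mult_self1)
  show ?thesis
  proof (rule eq_vecI)
    fix i assume "i < dim_vec (vec (Suc m) (coeff ((monom 1 1 * poly_of_vec w) mod g)))"
    then have i: "i < Suc m" by simp
    have "(transpose_mat (companion_mat (Suc m) (\<lambda>i. - coeff g i)) *\<^sub>v w) $ i
        = (\<Sum>j<m. (if i = Suc j then w $ j else 0)) - coeff g i * a"
      using i w by (auto simp: companion_mat_def scalar_prod_def lessThan_atLeast0[symmetric] a_def
          intro!: sum.cong)
    also have "(\<Sum>j<m. (if i = Suc j then w $ j else 0)) = (if 0 < i then w $ (i - 1) else 0)"
      using i by (cases i) auto
    finally show "(transpose_mat (companion_mat (Suc m) (\<lambda>i. - coeff g i)) *\<^sub>v w) $ i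
        = vec (Suc m) (coeff ((monom 1 1 * poly_of_vec w) mod g)) $ i"
      unfolding mod_eq using i by (simp add: coeff_q mult.commute)
  qed (simp add: companion_mat_def)
qed

lemma transpose_companion_pow_mult_vec:
  fixes g :: "'a::field poly"
  assumes lc: "lead_coeff g = 1" and dg: "degree g = Suc m" and w: "w \<in> carrier_vec (Suc m)"
  shows "transpose_mat (companion_mat (Suc m) (\<lambda>i. - coeff g i) ^\<^sub>m e) *\<^sub>v w
       = vec (Suc m) (coeff ((monom 1 e * poly_of_vec w) mod g))"
  using w
proof (induction e arbitrary: w)
  case 0
  then have "degree (poly_of_vec w) < degree g"
    using degree_poly_of_vec_le[of w] dg by simp
  then show ?case
    using 0 by (simp add: mod_poly_less vec_coeff_poly_of_vec companion_mat_def)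
next
  case (Suc e)
  define C where "C = companion_mat (Suc m) (\<lambda>i. - coeff g i)"
  define r where "r = (monom 1 e * poly_of_vec w) mod g"
  have C: "C \<in> carrier_mat (Suc m) (Suc m)"
    by (simp add: C_def companion_mat_def)
  have "transpose_mat (C ^\<^sub>m Suc e) *\<^sub>v w = (transpose_mat C * transpose_mat (C ^\<^sub>m e)) *\<^sub>v w"
    using C by (simp add: transpose_mult[of _ "Suc m" "Suc m" _ "Suc m"])
  also have "\<dots> = transpose_mat C *\<^sub>v (transpose_mat (C ^\<^sub>m e) *\<^sub>v w)"
    using C Suc.prems by (intro assoc_mult_mat_vec[of _ "Suc m" "Suc m" _ "Suc m"]) auto
  also have "transpose_mat (C ^\<^sub>m e) *\<^sub>v w = vec (Suc m) (coeff r)"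
    unfolding C_def r_def using Suc by blast
  also have "transpose_mat C *\<^sub>v vec (Suc m) (coeff r) = vec (Suc m) (coeff ((monom 1 1 * r) mod g))"
    using dg degree_mod_less_degree_pos[of g]
    by (simp add: C_def r_def transpose_companion_mult_vec[OF lc dg] poly_of_vec_vec_coeff)
  also have "(monom 1 1 * r) mod g = (monom 1 (Suc e) * poly_of_vec w) mod g"
    by (simp add: r_def mod_mult_right_eq mult.assoc[symmetric] mult_monom)
  finally show ?case
    unfolding C_def .
qed

lemma systematic_code_eq:
  assumes "M \<in> carrier_mat k k"
  shows "systematic_code M = (\<lambda>u. u @\<^sub>v (transpose_mat M *\<^sub>v u)) ` carrier_vec k"
proof -
  have dim: "dim_row M = k"
    using assms by simp
  have "systematic_code M
      = (\<lambda>u. vec (2 * k) (\<lambda>i. if i < k then u $ i else (transpose_mat M *\<^sub>v u) $ (i - k))) ` carrier_vec k"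
    unfolding systematic_code_def Let_def Setcompr_eq_image dim ..
  also have "\<dots> = (\<lambda>u. u @\<^sub>v (transpose_mat M *\<^sub>v u)) ` carrier_vec k"
    using assms by (intro image_cong refl eq_vecI) auto
  finally show ?thesis .
qed

lemma hamming_dist_append_mult_vec:
  fixes M :: "'a::comm_ring_1 mat"
  assumes M: "M \<in> carrier_mat l k" and u: "u \<in> carrier_vec k" and v: "v \<in> carrier_vec k"
  shows "hamming_dist (u @\<^sub>v (M *\<^sub>v u)) (v @\<^sub>v (M *\<^sub>v v))
       = hamming_weight (u - v) + hamming_weight (M *\<^sub>v (u - v))"
proof -
  have "(u @\<^sub>v (M *\<^sub>v u)) - (v @\<^sub>v (M *\<^sub>v v)) = (u - v) @\<^sub>v (M *\<^sub>v u - M *\<^sub>v v)"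
    using M u v by (intro eq_vecI) auto
  also have "M *\<^sub>v u - M *\<^sub>v v = M *\<^sub>v (u - v)"
    using M u v by (simp add: mult_minus_distrib_mat_vec)
  finally show ?thesis
    using M u v by (simp add: hamming_dist_eq_hamming_weight_diff hamming_weight_append_vec)
qed

lemma is_MDS_matrixI:
  fixes M :: "'a::comm_ring_1 mat"
  assumes M: "M \<in> carrier_mat k k" and k: "k > 0"
    and weight: "\<And>u. u \<in> carrier_vec k \<Longrightarrow> u \<noteq> 0\<^sub>v k \<Longrightarrow>
      k + 1 \<le> hamming_weight u + hamming_weight (transpose_mat M *\<^sub>v u)"
  shows "is_MDS_matrix M"
proof -
  let ?cw = "\<lambda>u. u @\<^sub>v (transpose_mat M *\<^sub>v u)"
  define e :: "'a vec" where "e = unit_vec k 0"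
  have MT: "transpose_mat M \<in> carrier_mat k k"
    using M by simp
  have code: "systematic_code M = ?cw ` carrier_vec k"
    using M by (rule systematic_code_eq)
  have e: "e \<in> carrier_vec k" "?cw e \<noteq> ?cw (0\<^sub>v k)"
    using k MT by (auto simp: e_def vec_eq_iff)
  have "{i. i < dim_vec e \<and> e $ i \<noteq> 0} = {0}"
    using k by (auto simp: e_def split: if_splits)
  then have "hamming_weight e = 1"
    by (simp add: hamming_weight_def)
  then have dist_e: "hamming_dist (?cw e) (?cw (0\<^sub>v k)) \<le> k + 1"
    using hamming_dist_append_mult_vec[OF MT e(1), of "0\<^sub>v k"] e(1) MT
      hamming_weight_le_dim_vec[of "transpose_mat M *\<^sub>v e"] by simp
  have dist_ge: "k + 1 \<le> hamming_dist x y"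
    if xy: "x \<in> systematic_code M" "y \<in> systematic_code M" "x \<noteq> y" for x y
  proof -
    obtain u v where uv: "x = ?cw u" "y = ?cw v" "u \<in> carrier_vec k" "v \<in> carrier_vec k"
      using xy(1,2) unfolding code by blast
    then have "u \<noteq> v"
      using xy(3) by blast
    then have "u - v \<noteq> 0\<^sub>v k"
      using uv(3,4) by (auto simp: vec_eq_iff)
    then show ?thesis
      using uv weight[of "u - v"] hamming_dist_append_mult_vec[OF MT] by simp
  qed
  have "systematic_code M \<subseteq> carrier_vec (2 * k)"
    using M by (auto simp: code mult_2)
  then have "min_dist (systematic_code M) = k + 1"
    using e dist_e dist_ge by (intro min_dist_eqI) (auto simp: code)
  then show ?thesis
    using M by (simp add: is_MDS_matrix_def is_MDS_code_def)
qed

lemma min_dist_cyclic_code_le_hamming_weight: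
  assumes "n > 0" "c \<in> cyclic_code n g" "c \<noteq> 0\<^sub>v n"
  shows "min_dist (cyclic_code n g) \<le> hamming_weight c"
proof -
  have code: "cyclic_code n g \<subseteq> carrier_vec n"
    by (auto simp: cyclic_code_def)
  have "0\<^sub>v n \<in> cyclic_code n g"
    unfolding cyclic_code_def using assms(1) by (intro CollectI exI[of _ 0]) auto
  then have "min_dist (cyclic_code n g) \<le> hamming_dist c (0\<^sub>v n)"
    using assms(2,3) by (intro min_dist_le_hamming_dist[OF code])
  also have "hamming_dist c (0\<^sub>v n) = hamming_weight c"
    using assms(2) code by (auto simp: hamming_dist_eq_hamming_weight_diff)
  finally show ?thesis .
qed

lemma min_dist_cyclic_code_le_redundancy_weight:
  fixes g :: "'a::field poly"
  assumes dg: "degree g = k" and k: "k > 0" and n: "2 * k \<le> n"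
    and u: "u \<in> carrier_vec k" "u \<noteq> 0\<^sub>v k"
  shows "min_dist (cyclic_code n g)
    \<le> hamming_weight u + hamming_weight (vec k (coeff ((monom 1 k * poly_of_vec u) mod g)))"
proof -
  define r where "r = (monom 1 k * poly_of_vec u) mod g"
  define p where "p = monom 1 k * poly_of_vec u - r"
  have "degree r < k"
    unfolding r_def using dg k degree_mod_less_degree_pos by blast
  then have coeff_p: "coeff p i = (if i < k then - coeff r i else if i < 2 * k then u $ (i - k) else 0)" for i
    using u(1) by (auto simp: p_def coeff_monom_mult coeff_poly_of_vec coeff_eq_0)
  have word: "vec n (coeff p) = - vec k (coeff r) @\<^sub>v u @\<^sub>v 0\<^sub>v (n - 2 * k)"
    using n u(1) by (intro eq_vecI) (auto simp: coeff_p)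
  have weight: "hamming_weight (vec n (coeff p)) = hamming_weight (vec k (coeff r)) + hamming_weight u"
    by (simp add: word hamming_weight_append_vec)
  have "g dvd p"
    by (simp add: p_def r_def dvd_minus_mod)
  moreover have "degree p < n"
    using n k by (intro degree_lessI) (auto simp: coeff_p)
  ultimately have "vec n (coeff p) \<in> cyclic_code n g"
    by (auto simp: cyclic_code_def)
  moreover have "hamming_weight u \<noteq> 0"
    using u by (simp add: hamming_weight_eq_0_iff)
  then have "vec n (coeff p) \<noteq> 0\<^sub>v n"
    using weight by (metis add_is_0 hamming_weight_zero)
  ultimately show ?thesis
    using n k weight min_dist_cyclic_code_le_hamming_weight[of n "vec n (coeff p)" g]
    unfolding r_def by simp
qed

theorem is_MDS_matrix_companion_pow:
  fixes g :: "'a::field poly"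
  assumes lc: "lead_coeff g = 1" and dg: "degree g = k" and k: "k > 0" and n: "2 * k \<le> n"
    and MDS: "min_dist (cyclic_code n g) = k + 1"
  shows "is_MDS_matrix (companion_mat k (\<lambda>i. - coeff g i) ^\<^sub>m k)"
proof -
  obtain m where m: "k = Suc m"
    using k gr0_implies_Suc by blast
  show ?thesis
  proof (rule is_MDS_matrixI)
    show "companion_mat k (\<lambda>i. - coeff g i) ^\<^sub>m k \<in> carrier_mat k k"
      by (simp add: companion_mat_def)
    fix u :: "'a vec" assume u: "u \<in> carrier_vec k" "u \<noteq> 0\<^sub>v k"
    have "transpose_mat (companion_mat k (\<lambda>i. - coeff g i) ^\<^sub>m k) *\<^sub>v u
        = vec k (coeff ((monom 1 k * poly_of_vec u) mod g))"
      unfolding m by (rule transpose_companion_pow_mult_vec[OF lc]) (use dg u m in auto)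
    then show "k + 1 \<le> hamming_weight u
        + hamming_weight (transpose_mat (companion_mat k (\<lambda>i. - coeff g i) ^\<^sub>m k) *\<^sub>v u)"
      using min_dist_cyclic_code_le_redundancy_weight[OF dg k n u] MDS by simp
  qed (rule k)
qed

theorem mainTheorem1:
  fixes g :: "'a::{field,finite} poly" and s k n :: nat
  assumes "s \<ge> 1" and "card (UNIV :: 'a set) = 2 ^ s"
    and "n \<ge> 2 * k" and "2 * k \<ge> 2"
    and "lead_coeff g = 1" and "degree g = k"
    and "g dvd (monom 1 n - 1)"
    and "is_MDS_code n (n - k) (cyclic_code n g)"
  shows "is_MDS_matrix (companion_mat k (\<lambda>i. coeff g i) ^\<^sub>m k)"
proof -
  have "min_dist (cyclic_code n g) = k + 1"
    using assms(3,8) by (simp add: is_MDS_code_def)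
  then have "is_MDS_matrix (companion_mat k (\<lambda>i. - coeff g i) ^\<^sub>m k)"
    using assms(3-6) by (intro is_MDS_matrix_companion_pow) auto
  moreover have "CHAR('a) = 2"
    using assms(2) by (rule CHAR_eq_2_if_card_eq_power_2)
  then have "companion_mat k (\<lambda>i. - coeff g i) = companion_mat k (\<lambda>i. coeff g i)"
    by (simp add: uminus_CHAR_2)
  ultimately show ?thesis
    by (simp only:)
qed
end
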